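(* In the qubit–battery model with the "copy" interaction $U_{SB}$, let $\psi:[0,\infty)\to\mathbb C$ be twice continuously differentiable with $\psi(0)=0$, $\int_0^\infty|\psi(x)|^2dx=1$, and $|\psi(x)|+|\psi'(x)|+|\psi''(x)|\le C(1+x)^{-2}$ for some constant $C$. For $\delta>0$ let $|\beta^{(\delta)}\rangle_B=C_\delta\sum_{n\ge0}\psi(n\delta)|n\rangle_B$ with $C_\delta=(\sum_{n\ge0}|\psi(n\delta)|^2)^{-1/2}$. Then $$\lim_{\delta\to0^+}\frac{\epsilon_C(\mathbf\Phi_{|\beta^{(\delta)}\rangle},\mathcal V)}{\delta^2}=|V_{01}|^2\,\mathrm{UD}(\psi),\qquad \mathrm{UD}(\psi):=\int_0^\infty|\psi'(x)|^2\,dx .$$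
   Context: Qubit $S$ with energy basis $|0\rangle,|1\rangle$ and $H_S=\frac\omega2(|1\rangle\langle1|-|0\rangle\langle0|)$; battery $B$ with basis $\{|n\rangle\}_{n\ge0}$, $H_B=\omega\sum_n n|n\rangle\langle n|$. $V_S$ a qubit unitary, $V_{ij}=\langle i|V_S|j\rangle$, $\mathcal V(\cdot)=V_S\cdot V_S^\dagger$. "Copy" interaction: $U_{SB}=|0\rangle\langle0|_S\otimes|0\rangle\langle0|_B+\sum_{n\ge1}\sum_{i,j\in\{0,1\}}V_{ij}|i\rangle\langle j|_S\otimes|n-i\rangle\langle n-j|_B$. Channel $\mathbf\Phi_{|\beta\rangle}(\rho)=\mathrm{Tr}_B[U_{SB}(\rho\otimes|\beta\rangle\langle\beta|)U_{SB}^\dagger]$ with Kraus operators $K^{(n)}={}_B\langle n|U_{SB}|\beta\rangle$; Choi infidelity $\epsilon_C=1-\frac14\sum_n|\mathrm{Tr}[V_S^\dagger K^{(n)}]|^2$. *)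

theory Defs
  imports "HOL-Analysis.Analysis"
begin

text \<open>A qubit operator is represented by its matrix entries V i j = <i|V|j>, i,j in {0,1}.
  Battery basis states |n> are indexed by nat.  Product basis state |i>_S |n>_B is (i,n).\<close>

definition qubit_unitary :: "(nat \<Rightarrow> nat \<Rightarrow> complex) \<Rightarrow> bool" where
  "qubit_unitary V \<longleftrightarrow>
     (\<forall>i<2. \<forall>j<2. (\<Sum>k<2. cnj (V k i) * V k j) = (if i = j then 1 else 0))"

text \<open>Matrix entries <i,n| U_SB |j,m> of the copy interaction
  U_SB = |0><0| (x) |0><0| + sum_{k>=1} sum_{i,j} V_ij |i><j| (x) |k-i><k-j|.\<close>
definition USB :: "(nat \<Rightarrow> nat \<Rightarrow> complex) \<Rightarrow> nat \<times> nat \<Rightarrow> nat \<times> nat \<Rightarrow> complex" where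
  "USB V im jm' = (case im of (i, n) \<Rightarrow> case jm' of (j, m) \<Rightarrow>
     (if i = 0 \<and> n = 0 \<and> j = 0 \<and> m = 0 then 1 else 0)
     + (\<Sum>\<^sub>\<infinity>k\<in>{1..}. if i < 2 \<and> j < 2 \<and> n = k - i \<and> m = k - j then V i j else 0))"

text \<open>Kraus operator K^(n) = <n|_B U_SB |beta>_B, entries <i|K^(n)|j>;
  the battery state is given by its coefficients b m = <m|beta>.\<close>
definition kraus :: "(nat \<Rightarrow> nat \<Rightarrow> complex) \<Rightarrow> (nat \<Rightarrow> complex) \<Rightarrow> nat \<Rightarrow> nat \<Rightarrow> nat \<Rightarrow> complex" where
  "kraus V b n i j = (\<Sum>\<^sub>\<infinity>m. USB V (i, n) (j, m) * b m)"

definition choi_infidelity :: "(nat \<Rightarrow> nat \<Rightarrow> complex) \<Rightarrow> (nat \<Rightarrow> complex) \<Rightarrow> real" where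
  "choi_infidelity V b =
     1 - 1/4 * (\<Sum>\<^sub>\<infinity>n. (cmod (\<Sum>i<2. \<Sum>j<2. cnj (V i j) * kraus V b n i j))^2)"

definition beta_state :: "(real \<Rightarrow> complex) \<Rightarrow> real \<Rightarrow> nat \<Rightarrow> complex" where
  "beta_state \<psi> \<delta> n =
     complex_of_real (1 / sqrt (\<Sum>k. (cmod (\<psi> (real k * \<delta>)))^2)) * \<psi> (real n * \<delta>)"

definition UD :: "(real \<Rightarrow> complex) \<Rightarrow> real" where
  "UD \<psi>' = integral {0..} (\<lambda>x. (cmod (\<psi>' x))^2)"

end

theory Submission
  imports Defs
begin

text \<open>The trace of V^dagger K^(n) is 2 b_n + |V_01|^2 (b_(n-1) - 2 b_n + b_(n+1)), so for a
  normalised battery state with b_0 = 0 summation by parts gives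
  eps_C = |V_01|^2 sum |b_(n+1) - b_n|^2 - |V_01|^4/4 sum |b_(n-1) - 2 b_n + b_(n+1)|^2.
  For b_n = C_delta psi(n delta) the normalisation C_delta^(-2) is a Riemann sum, asymptotic to
  1/delta; the first differences are delta psi'(n delta) + O(delta^2 (1 + n delta)^(-2)), so the
  first sum is asymptotic to delta^2 UD(psi); the second differences are O(delta^2 (1 + n delta)^(-2))
  away from the boundary and O(delta) at n = 0, which makes the second sum O(delta^3).\<close>

lemma infsum_eq_single:
  fixes f :: "'a \<Rightarrow> 'b::{comm_monoid_add,t2_space}"
  assumes "\<And>x. x \<in> A \<Longrightarrow> x \<noteq> a \<Longrightarrow> f x = 0"
  shows "infsum f A = (if a \<in> A then f a else 0)"
proof -
  have "infsum f A = infsum f (A \<inter> {a})"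
    by (rule infsum_cong_neutral) (use assms in auto)
  then show ?thesis
    by (cases "a \<in> A") auto
qed

lemma USB_entry:
  assumes "i < 2" "j < 2"
  shows "USB V (i, n) (j, m) = (if i = 0 \<and> n = 0 \<and> j = 0 \<and> m = 0 then 1 else 0)
     + (if 0 < n + i \<and> m = n + i - j then V i j else 0)"
proof -
  have "(\<Sum>\<^sub>\<infinity>k\<in>{1..}. if i < 2 \<and> j < 2 \<and> n = k - i \<and> m = k - j then V i j else 0)
      = (if n + i \<in> {1..} then (if m = n + i - j then V i j else 0) else 0)"
    by (subst infsum_eq_single[where a = "n + i"]) (use assms in \<open>auto simp: less_2_cases_iff\<close>)
  then show ?thesis
    unfolding USB_def by auto
qed

lemma kraus_entry:
  assumes "i < 2" "j < 2"
  shows "kraus V b n i j = (if i = 0 \<and> j = 0 \<and> n = 0 then b 0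
      else if 0 < n + i then V i j * b (n + i - j) else 0)"
proof (cases "i = 0 \<and> j = 0 \<and> n = 0")
  case True
  then show ?thesis
    unfolding kraus_def by (subst infsum_eq_single[where a = 0]) (auto simp: USB_entry)
next
  case False
  then show ?thesis
    unfolding kraus_def using assms
    by (subst infsum_eq_single[where a = "n + i - j"]) (auto simp: USB_entry)
qed

lemma cnj_mult_self_eq: "cnj z * z = complex_of_real ((cmod z)\<^sup>2)"
  using complex_norm_square[of z] by (simp add: mult.commute)

lemma qubit_unitary_norms:
  assumes "qubit_unitary V"
  shows "(cmod (V 1 0))\<^sup>2 = (cmod (V 0 1))\<^sup>2"
    and "(cmod (V 0 0))\<^sup>2 + (cmod (V 1 1))\<^sup>2 = 2 - 2 * (cmod (V 0 1))\<^sup>2"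
proof -
  have col0: "cnj (V 0 0) * V 0 0 + cnj (V 1 0) * V 1 0 = 1"
    and col1: "cnj (V 0 1) * V 0 1 + cnj (V 1 1) * V 1 1 = 1"
    and orth: "cnj (V 0 0) * V 0 1 + cnj (V 1 0) * V 1 1 = 0"
    using assms unfolding qubit_unitary_def
    by (auto dest!: spec[of _ 0] spec[of _ 1] simp: numeral_2_eq_2)
  define a c p q where "a = (cmod (V 0 0))\<^sup>2" and "c = (cmod (V 1 0))\<^sup>2"
    and "p = (cmod (V 0 1))\<^sup>2" and "q = (cmod (V 1 1))\<^sup>2"
  have "a + c = 1" "p + q = 1"
    using col0 col1 unfolding a_def c_def p_def q_def cnj_mult_self_eq
    by (metis of_real_add of_real_eq_1_iff)+
  moreover have "a * p = c * q"
  proof -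
    have "cnj (V 0 0) * V 0 1 = - (cnj (V 1 0) * V 1 1)"
      using orth by (simp add: eq_neg_iff_add_eq_0)
    then have "(cmod (cnj (V 0 0) * V 0 1))\<^sup>2 = (cmod (cnj (V 1 0) * V 1 1))\<^sup>2"
      by simp
    then show ?thesis
      unfolding a_def c_def p_def q_def by (simp add: norm_mult power_mult_distrib)
  qed
  ultimately have "a * p = (1 - a) * (1 - p)"
    by (metis add_diff_cancel_left')
  then have "c = p"
    using \<open>a + c = 1\<close> by (simp add: algebra_simps)
  with \<open>a + c = 1\<close> \<open>p + q = 1\<close> show "c = p" "a + q = 2 - 2 * p"
    by auto
qed

definition second_diff :: "(nat \<Rightarrow> complex) \<Rightarrow> nat \<Rightarrow> complex" where
  "second_diff b n = (case n of 0 \<Rightarrow> 0 | Suc m \<Rightarrow> b m) - 2 * b n + b (Suc n)"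

lemma second_diff_Suc: "second_diff b (Suc n) = (b (Suc (Suc n)) - b (Suc n)) - (b (Suc n) - b n)"
  by (simp add: second_diff_def)

lemma second_diff_scale: "second_diff (\<lambda>n. c * b n) n = c * second_diff b n"
  by (simp add: second_diff_def algebra_simps split: nat.split)

lemma trace_adjoint_kraus:
  assumes "qubit_unitary V" and "b 0 = 0"
  shows "(\<Sum>i<2. \<Sum>j<2. cnj (V i j) * kraus V b n i j)
     = 2 * b n + complex_of_real ((cmod (V 0 1))\<^sup>2) * second_diff b n"
proof -
  have flip: "cnj (V 1 0) * V 1 0 = complex_of_real ((cmod (V 0 1))\<^sup>2)"
    and diag: "cnj (V 0 0) * V 0 0 + cnj (V 1 1) * V 1 1 = 2 - 2 * complex_of_real ((cmod (V 0 1))\<^sup>2)"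
    using arg_cong[OF qubit_unitary_norms(1)[OF assms(1)], of complex_of_real]
      arg_cong[OF qubit_unitary_norms(2)[OF assms(1)], of complex_of_real]
    by (simp_all add: cnj_mult_self_eq)
  have "(\<Sum>i<2. \<Sum>j<2. cnj (V i j) * kraus V b n i j)
      = (cnj (V 0 0) * V 0 0 + cnj (V 1 1) * V 1 1) * b n
        + cnj (V 0 1) * V 0 1 * (case n of 0 \<Rightarrow> 0 | Suc m \<Rightarrow> b m) + cnj (V 1 0) * V 1 0 * b (Suc n)"
    using assms(2) by (cases n) (simp_all add: numeral_2_eq_2 kraus_entry algebra_simps)
  also have "\<dots> = (2 - 2 * complex_of_real ((cmod (V 0 1))\<^sup>2)) * b n
      + complex_of_real ((cmod (V 0 1))\<^sup>2) * ((case n of 0 \<Rightarrow> 0 | Suc m \<Rightarrow> b m) + b (Suc n))"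
    unfolding diag flip cnj_mult_self_eq[of "V 0 1"] by (simp only: distrib_left add.assoc)
  finally show ?thesis
    by (simp add: second_diff_def algebra_simps)
qed

text \<open>Polarisation of the cross term: after summation over n, the squared norms telescope
  (summation by parts) and leave -2 times the sum of the squared first differences.\<close>
lemma cmod_sq_trace_expand:
  fixes b x y :: complex and p :: real
  shows "(cmod (2 * b + complex_of_real p * (x - 2 * b + y)))\<^sup>2 =
    4 * (cmod b)\<^sup>2 + 2 * p * ((cmod y)\<^sup>2 + (cmod x)\<^sup>2 - 2 * (cmod b)\<^sup>2 - (cmod (y - b))\<^sup>2 - (cmod (x - b))\<^sup>2)
    + p\<^sup>2 * (cmod (x - 2 * b + y))\<^sup>2"
  unfolding cmod_power2 by (simp add: power2_eq_square algebra_simps)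

lemma summable_norm_sq_diff:
  fixes u v :: "nat \<Rightarrow> 'a::real_normed_vector"
  assumes "summable (\<lambda>n. (norm (u n))\<^sup>2)" and "summable (\<lambda>n. (norm (v n))\<^sup>2)"
  shows "summable (\<lambda>n. (norm (u n - v n))\<^sup>2)"
proof (rule summable_comparison_test[OF _ summable_add[OF summable_mult[OF assms(1)] summable_mult[OF assms(2)]]])
  have "(norm (u n - v n))\<^sup>2 \<le> 2 * (norm (u n))\<^sup>2 + 2 * (norm (v n))\<^sup>2" for n
  proof -
    have "(norm (u n - v n))\<^sup>2 \<le> (norm (u n) + norm (v n))\<^sup>2"
      by (simp add: norm_triangle_ineq4 power_mono)
    also have "\<dots> \<le> 2 * (norm (u n))\<^sup>2 + 2 * (norm (v n))\<^sup>2"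
      using sum_squares_ge_zero[of "norm (u n) - norm (v n)" 0] by (simp add: power2_eq_square algebra_simps)
    finally show ?thesis .
  qed
  then show "\<exists>N. \<forall>n\<ge>N. norm ((norm (u n - v n))\<^sup>2) \<le> 2 * (norm (u n))\<^sup>2 + 2 * (norm (v n))\<^sup>2"
    by simp
qed

lemma summable_cmod_sq_diffs:
  assumes "summable (\<lambda>n. (cmod (b n))\<^sup>2)"
  shows "summable (\<lambda>n. (cmod (b (Suc n) - b n))\<^sup>2)"
    and "summable (\<lambda>n. (cmod (second_diff b n))\<^sup>2)"
proof -
  have "summable (\<lambda>n. (cmod (b (Suc n)))\<^sup>2)"
    using assms by (subst summable_Suc_iff)
  then show diff: "summable (\<lambda>n. (cmod (b (Suc n) - b n))\<^sup>2)"
    using assms by (rule summable_norm_sq_diff)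
  have "summable (\<lambda>n. (cmod (b (Suc (Suc n)) - b (Suc n)))\<^sup>2)"
    using diff by (subst summable_Suc_iff[of "\<lambda>n. (cmod (b (Suc n) - b n))\<^sup>2"])
  from summable_norm_sq_diff[OF this diff]
  show "summable (\<lambda>n. (cmod (second_diff b n))\<^sup>2)"
    by (subst summable_Suc_iff[symmetric]) (simp add: second_diff_Suc)
qed

lemma choi_infidelity_eq:
  assumes "qubit_unitary V" and b0: "b 0 = 0" and sq: "summable (\<lambda>n. (cmod (b n))\<^sup>2)"
  shows "choi_infidelity V b = 1 - (\<Sum>n. (cmod (b n))\<^sup>2)
     + (cmod (V 0 1))\<^sup>2 * (\<Sum>n. (cmod (b (Suc n) - b n))\<^sup>2)
     - ((cmod (V 0 1))\<^sup>2)\<^sup>2 / 4 * (\<Sum>n. (cmod (second_diff b n))\<^sup>2)"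
proof -
  define p where "p = (cmod (V 0 1))\<^sup>2"
  define prev where "prev n = (case n of 0 \<Rightarrow> 0 | Suc m \<Rightarrow> b m)" for n
  define B E D where "B = (\<Sum>n. (cmod (b n))\<^sup>2)" and "E = (\<Sum>n. (cmod (b (Suc n) - b n))\<^sup>2)"
    and "D = (\<Sum>n. (cmod (second_diff b n))\<^sup>2)"
  have B: "(\<lambda>n. (cmod (b n))\<^sup>2) sums B"
    using sq by (simp add: B_def summable_sums)
  have B_next: "(\<lambda>n. (cmod (b (Suc n)))\<^sup>2) sums B"
    using B sums_Suc_iff[of "\<lambda>n. (cmod (b n))\<^sup>2"] b0 by simp
  have B_prev: "(\<lambda>n. (cmod (prev n))\<^sup>2) sums B"
    using B sums_Suc_iff[of "\<lambda>n. (cmod (prev n))\<^sup>2"] by (simp add: prev_def)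
  have E: "(\<lambda>n. (cmod (b (Suc n) - b n))\<^sup>2) sums E"
    using summable_cmod_sq_diffs(1)[OF sq] by (simp add: E_def summable_sums)
  have E_prev: "(\<lambda>n. (cmod (prev n - b n))\<^sup>2) sums E"
    using E sums_Suc_iff[of "\<lambda>n. (cmod (prev n - b n))\<^sup>2"] b0
    by (simp add: prev_def norm_minus_commute)
  have D: "(\<lambda>n. (cmod (second_diff b n))\<^sup>2) sums D"
    using summable_cmod_sq_diffs(2)[OF sq] by (simp add: D_def summable_sums)
  have trace_sq: "(cmod (\<Sum>i<2. \<Sum>j<2. cnj (V i j) * kraus V b n i j))\<^sup>2
      = 4 * (cmod (b n))\<^sup>2 + 2 * p * ((cmod (b (Suc n)))\<^sup>2 + (cmod (prev n))\<^sup>2 - 2 * (cmod (b n))\<^sup>2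
          - (cmod (b (Suc n) - b n))\<^sup>2 - (cmod (prev n - b n))\<^sup>2) + p\<^sup>2 * (cmod (second_diff b n))\<^sup>2" for n
    unfolding trace_adjoint_kraus[of V b, OF assms(1) b0] second_diff_def prev_def[symmetric] p_def
    by (rule cmod_sq_trace_expand)
  have "(\<lambda>n. (cmod (\<Sum>i<2. \<Sum>j<2. cnj (V i j) * kraus V b n i j))\<^sup>2)
      sums (4 * B + 2 * p * (B + B - 2 * B - E - E) + p\<^sup>2 * D)"
    unfolding trace_sq by (intro sums_add sums_mult sums_diff B B_next B_prev E E_prev D)
  then have "(\<Sum>\<^sub>\<infinity>n. (cmod (\<Sum>i<2. \<Sum>j<2. cnj (V i j) * kraus V b n i j))\<^sup>2) = 4 * B - 4 * p * E + p\<^sup>2 * D"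
    by (intro infsumI sums_nonneg_imp_has_sum) (auto simp: algebra_simps)
  then show ?thesis
    unfolding choi_infidelity_def B_def E_def D_def p_def by (simp add: algebra_simps)
qed

lemma choi_infidelity_normalized:
  assumes "qubit_unitary V" and "a 0 = 0" and sq: "summable (\<lambda>n. (cmod (a n))\<^sup>2)"
    and "0 < (\<Sum>n. (cmod (a n))\<^sup>2)"
  shows "choi_infidelity V (\<lambda>n. complex_of_real (1 / sqrt (\<Sum>k. (cmod (a k))\<^sup>2)) * a n)
    = ((cmod (V 0 1))\<^sup>2 * (\<Sum>n. (cmod (a (Suc n) - a n))\<^sup>2)
       - ((cmod (V 0 1))\<^sup>2)\<^sup>2 / 4 * (\<Sum>n. (cmod (second_diff a n))\<^sup>2)) / (\<Sum>n. (cmod (a n))\<^sup>2)"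
proof -
  define S where "S = (\<Sum>n. (cmod (a n))\<^sup>2)"
  have "0 < S"
    using assms(4) by (simp add: S_def)
  define c where "c = complex_of_real (1 / sqrt S)"
  have scale: "(cmod (c * z))\<^sup>2 = (cmod z)\<^sup>2 / S" for z
    using \<open>0 < S\<close> by (simp add: c_def norm_divide power_divide)
  have scaled_sums: "(\<Sum>n. (cmod (c * f n))\<^sup>2) = (\<Sum>n. (cmod (f n))\<^sup>2) / S"
    if "summable (\<lambda>n. (cmod (f n))\<^sup>2)" for f
    unfolding scale using that by (rule suminf_divide)
  have "summable (\<lambda>n. (cmod (c * a n))\<^sup>2)"
    unfolding scale using sq by (rule summable_divide)
  from choi_infidelity_eq[OF assms(1) _ this] assms(2)
  have "choi_infidelity V (\<lambda>n. c * a n) = 1 - (\<Sum>n. (cmod (c * a n))\<^sup>2)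
     + (cmod (V 0 1))\<^sup>2 * (\<Sum>n. (cmod (c * (a (Suc n) - a n)))\<^sup>2)
     - ((cmod (V 0 1))\<^sup>2)\<^sup>2 / 4 * (\<Sum>n. (cmod (c * second_diff a n))\<^sup>2)"
    by (simp add: second_diff_scale right_diff_distrib)
  also have "\<dots> = ((cmod (V 0 1))\<^sup>2 * (\<Sum>n. (cmod (a (Suc n) - a n))\<^sup>2)
       - ((cmod (V 0 1))\<^sup>2)\<^sup>2 / 4 * (\<Sum>n. (cmod (second_diff a n))\<^sup>2)) / S"
    using \<open>0 < S\<close> summable_cmod_sq_diffs[OF sq]
    by (simp add: scaled_sums[OF sq] scaled_sums S_def[symmetric] diff_divide_distrib)
  finally show ?thesis
    unfolding c_def S_def .
qed

lemma inverse_square_antimono: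
  fixes x y C :: real
  shows "0 \<le> x \<Longrightarrow> x \<le> y \<Longrightarrow> 0 \<le> C \<Longrightarrow> C / (1 + y)\<^sup>2 \<le> C / (1 + x)\<^sup>2"
  by (intro divide_left_mono power_mono mult_pos_pos) auto

lemma mult_inverse_square_le:
  fixes x a b :: real
  assumes "0 \<le> x" "0 \<le> a" "0 \<le> b"
  shows "a / (1 + x)\<^sup>2 * (b / (1 + x)\<^sup>2) \<le> a * b / (1 + x)\<^sup>2"
proof -
  have "1 \<le> (1 + x)\<^sup>2"
    using assms by simp
  then have "b / (1 + x)\<^sup>2 \<le> b"
    using divide_left_mono[of 1 "(1 + x)\<^sup>2" b] assms by simp
  then have "a / (1 + x)\<^sup>2 * (b / (1 + x)\<^sup>2) \<le> a / (1 + x)\<^sup>2 * b"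
    by (rule mult_left_mono) (use assms in simp)
  then show ?thesis
    by simp
qed

lemma norm_sq_diff_le:
  fixes u v :: "'a::real_normed_vector"
  assumes "norm u \<le> A" "norm v \<le> A" "norm (u - v) \<le> B"
  shows "\<bar>(norm u)\<^sup>2 - (norm v)\<^sup>2\<bar> \<le> 2 * A * B"
proof -
  have "(norm u)\<^sup>2 - (norm v)\<^sup>2 = (norm u - norm v) * (norm u + norm v)"
    by (simp add: power2_eq_square algebra_simps)
  then have "\<bar>(norm u)\<^sup>2 - (norm v)\<^sup>2\<bar> = \<bar>norm u - norm v\<bar> * (norm u + norm v)"
    by (simp add: abs_mult)
  also have "\<dots> \<le> B * (2 * A)"
    using assms norm_triangle_ineq3[of u v] by (intro mult_mono) auto
  finally show ?thesis
    by (simp add: mult_ac)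
qed

lemma inverse_square_grid_partial_sum_le:
  fixes d :: real
  assumes "0 < d"
  shows "(\<Sum>n<N. 1 / (1 + real n * d)\<^sup>2) \<le> (1 + d) / d * (1 - 1 / (1 + real N * d))"
proof (induction N)
  case 0
  then show ?case by simp
next
  case (Suc N)
  define x where "x = 1 + real N * d"
  have "1 \<le> x"
    using assms by (simp add: x_def)
  have telescope: "1 / x\<^sup>2 \<le> (1 + d) / d * (1 / x - 1 / (x + d))"
  proof -
    have "x * (x + d) \<le> (1 + d) * x\<^sup>2"
      using \<open>1 \<le> x\<close> assms mult_left_mono[of x "x * x" d]
      by (simp add: power2_eq_square algebra_simps)
    then have "1 / x\<^sup>2 \<le> (1 + d) / (x * (x + d))"
      using \<open>1 \<le> x\<close> assms by (simp add: divide_simps)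
    also have "\<dots> = (1 + d) / d * (1 / x - 1 / (x + d))"
      using \<open>1 \<le> x\<close> assms by (simp add: divide_simps)
    finally show ?thesis .
  qed
  have "(\<Sum>n<Suc N. 1 / (1 + real n * d)\<^sup>2) \<le> (1 + d) / d * (1 - 1 / x) + (1 + d) / d * (1 / x - 1 / (x + d))"
    using Suc.IH telescope by (simp add: x_def)
  also have "\<dots> = (1 + d) / d * (1 - 1 / (1 + real (Suc N) * d))"
    by (simp add: x_def algebra_simps)
  finally show ?case .
qed

lemma inverse_square_grid_summable:
  fixes d :: real
  assumes "0 < d"
  shows "summable (\<lambda>n. 1 / (1 + real n * d)\<^sup>2)"
    and "(\<Sum>n. 1 / (1 + real n * d)\<^sup>2) \<le> (1 + d) / d"
proof -
  have "(\<Sum>n<N. 1 / (1 + real n * d)\<^sup>2) \<le> (1 + d) / d" for N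
  proof -
    have "(1 + d) / d * (1 - 1 / (1 + real N * d)) \<le> (1 + d) / d"
      using assms by (intro mult_left_le) auto
    then show ?thesis
      using inverse_square_grid_partial_sum_le[OF assms, of N] by linarith
  qed
  moreover show summable: "summable (\<lambda>n. 1 / (1 + real n * d)\<^sup>2)"
    by (rule summableI_nonneg_bounded) (use calculation in auto)
  ultimately show "(\<Sum>n. 1 / (1 + real n * d)\<^sup>2) \<le> (1 + d) / d"
    using suminf_le_const[OF summable] by blast
qed

lemma suminf_close_inverse_square:
  fixes f g :: "nat \<Rightarrow> real"
  assumes "0 < d" and "summable g" and close: "\<And>n. \<bar>f n - g n\<bar> \<le> M / (1 + real n * d)\<^sup>2"
  shows "summable f" and "\<bar>suminf f - suminf g\<bar> \<le> M * (1 + d) / d"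
proof -
  note weights = inverse_square_grid_summable[OF assms(1)]
  have majorant: "summable (\<lambda>n. M * (1 / (1 + real n * d)\<^sup>2))"
    using weights(1) by (rule summable_mult)
  have abs_diff: "summable (\<lambda>n. \<bar>f n - g n\<bar>)"
    by (rule summable_comparison_test[OF _ majorant]) (use close in simp)
  then have diff: "summable (\<lambda>n. f n - g n)"
    by (rule summable_rabs_cancel)
  show "summable f"
    using summable_add[OF diff assms(2)] by simp
  have "\<bar>suminf f - suminf g\<bar> = \<bar>\<Sum>n. f n - g n\<bar>"
    using suminf_diff[OF \<open>summable f\<close> assms(2)] by simp
  also have "\<dots> \<le> (\<Sum>n. M * (1 / (1 + real n * d)\<^sup>2))"
    using summable_rabs[OF abs_diff] suminf_le[OF _ abs_diff majorant] close by force
  also have "\<dots> \<le> M * ((1 + d) / d)"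
    unfolding suminf_mult[OF weights(1)]
    using close[of 0] by (intro mult_left_mono weights(2)) auto
  finally show "\<bar>suminf f - suminf g\<bar> \<le> M * (1 + d) / d"
    by simp
qed

lemma tendsto_at_right_0_linear_bound:
  fixes F :: "real \<Rightarrow> real"
  assumes "\<And>d. 0 < d \<Longrightarrow> d \<le> 1 \<Longrightarrow> \<bar>F d - L\<bar> \<le> M * d"
  shows "(F \<longlongrightarrow> L) (at_right 0)"
proof (rule LIM_zero_cancel, rule Lim_null_comparison)
  show "\<forall>\<^sub>F d in at_right 0. norm (F d - L) \<le> M * d"
    unfolding eventually_at_right_field using assms by (intro exI[of _ 1]) auto
  show "((\<lambda>d. M * d) \<longlongrightarrow> 0) (at_right 0)"
    by (rule tendsto_mult_right_zero) (simp add: tendsto_ident_at)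
qed

lemma norm_diff_le_vector_derivative_bound:
  fixes f f' :: "real \<Rightarrow> 'a::real_normed_vector"
  assumes "a \<le> b"
    and der: "\<And>x. x \<in> {a..b} \<Longrightarrow> (f has_vector_derivative f' x) (at x within {a..b})"
    and bound: "\<And>x. x \<in> {a..b} \<Longrightarrow> norm (f' x) \<le> M"
  shows "norm (f b - f a) \<le> M * (b - a)"
proof -
  have "0 \<le> M"
    using bound[of a] \<open>a \<le> b\<close> by (meson atLeastAtMost_iff norm_ge_zero order_trans order_refl)
  have "norm (f b - f a) \<le> M * norm (b - a)"
  proof (rule differentiable_bound[where S = "{a..b}" and f' = "\<lambda>x h. h *\<^sub>R f' x"])
    show "(f has_derivative (\<lambda>h. h *\<^sub>R f' x)) (at x within {a..b})" if "x \<in> {a..b}" for x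
      using der[OF that] by (simp add: has_vector_derivative_def)
    show "onorm (\<lambda>h. h *\<^sub>R f' x) \<le> M" if "x \<in> {a..b}" for x
    proof (rule onorm_bound[OF \<open>0 \<le> M\<close>])
      show "norm (h *\<^sub>R f' x) \<le> M * norm h" for h
        using mult_left_mono[OF bound[OF that] abs_ge_zero[of h]] by (simp add: mult.commute)
    qed
  qed (use \<open>a \<le> b\<close> in auto)
  then show ?thesis
    using \<open>a \<le> b\<close> by simp
qed

lemma lipschitz_of_decaying_derivative:
  fixes f f' :: "real \<Rightarrow> 'a::real_normed_vector"
  assumes der: "\<And>x. x \<ge> 0 \<Longrightarrow> (f has_vector_derivative f' x) (at x within {0..})"
    and decay: "\<And>x. x \<ge> 0 \<Longrightarrow> norm (f' x) \<le> C / (1 + x)\<^sup>2"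
    and "0 \<le> x" "x \<le> y"
  shows "norm (f y - f x) \<le> C * (y - x) / (1 + x)\<^sup>2"
proof -
  have "0 \<le> C"
    using order_trans[OF norm_ge_zero decay[of 0]] by simp
  have "norm (f y - f x) \<le> C / (1 + x)\<^sup>2 * (y - x)"
  proof (rule norm_diff_le_vector_derivative_bound[OF \<open>x \<le> y\<close>])
    show "(f has_vector_derivative f' t) (at t within {x..y})" if "t \<in> {x..y}" for t
      using that \<open>0 \<le> x\<close> by (intro has_vector_derivative_within_subset[OF der]) auto
    show "norm (f' t) \<le> C / (1 + x)\<^sup>2" if "t \<in> {x..y}" for t
      using that \<open>0 \<le> x\<close> \<open>0 \<le> C\<close> decay[of t] inverse_square_antimono[of x t C] by auto
  qed
  then show ?thesis
    by simp
qed

lemma taylor_of_decaying_second_derivative: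
  fixes f f' f'' :: "real \<Rightarrow> 'a::real_normed_vector"
  assumes der: "\<And>x. x \<ge> 0 \<Longrightarrow> (f has_vector_derivative f' x) (at x within {0..})"
    and der': "\<And>x. x \<ge> 0 \<Longrightarrow> (f' has_vector_derivative f'' x) (at x within {0..})"
    and decay: "\<And>x. x \<ge> 0 \<Longrightarrow> norm (f'' x) \<le> C / (1 + x)\<^sup>2"
    and "0 \<le> x" "x \<le> z" "z \<le> y"
  shows "norm (f y - f x - (y - x) *\<^sub>R f' z) \<le> C * (y - x)\<^sup>2 / (1 + x)\<^sup>2"
proof -
  have "0 \<le> C"
    using order_trans[OF norm_ge_zero decay[of 0]] by simp
  have "norm (f y - f x - (y - x) *\<^sub>R f' z) \<le> norm (y - x) * (C * (y - x) / (1 + x)\<^sup>2)"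
  proof (rule vector_differentiable_bound_linearization[where S = "{x..y}"])
    show "(f has_vector_derivative f' t) (at t within {x..y})" if "t \<in> {x..y}" for t
      using that \<open>0 \<le> x\<close> by (intro has_vector_derivative_within_subset[OF der]) auto
    show "norm (f' t - f' z) \<le> C * (y - x) / (1 + x)\<^sup>2" if "t \<in> {x..y}" for t
    proof -
      have "norm (f' t - f' z) \<le> C * \<bar>t - z\<bar> / (1 + min t z)\<^sup>2"
        using lipschitz_of_decaying_derivative[OF der' decay, of "min t z" "max t z"] that assms(4-6)
        by (cases "t \<le> z") (auto simp: norm_minus_commute)
      also have "\<dots> \<le> C * (y - x) / (1 + x)\<^sup>2"
        using that assms(4-6) \<open>0 \<le> C\<close>
        by (intro frac_le mult_left_mono power_mono) auto
      finally show ?thesis .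
    qed
  qed (use assms(4-6) in \<open>auto simp: closed_segment_eq_real_ivl\<close>)
  then show ?thesis
    using assms(4-6) by (simp add: power2_eq_square mult_ac)
qed

lemma integral_cell_approx:
  fixes f :: "real \<Rightarrow> real"
  assumes "f integrable_on {x..x + d}" and "0 \<le> d" and "0 \<le> L"
    and lipschitz: "\<And>t. t \<in> {x..x + d} \<Longrightarrow> \<bar>f t - f x\<bar> \<le> L * (t - x)"
  shows "\<bar>d * f x - integral {x..x + d} f\<bar> \<le> L * d\<^sup>2"
proof -
  have integral: "((\<lambda>t. f t - f x) has_integral (integral {x..x + d} f - d * f x)) {x..x + d}"
    using has_integral_diff[OF integrable_integral[OF assms(1)] has_integral_const_real[of "f x" x "x + d"]]
      \<open>0 \<le> d\<close> by (simp add: mult.commute)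
  have bound: "norm (f t - f x) \<le> L * d" if "t \<in> {x..x + d} - {}" for t
    using lipschitz[of t] mult_left_mono[of "t - x" d L] that \<open>0 \<le> L\<close> by auto
  have "0 \<le> L * d"
    using \<open>0 \<le> L\<close> \<open>0 \<le> d\<close> by simp
  from has_integral_bound_real[OF this finite.emptyI integral bound] \<open>0 \<le> d\<close>
  show ?thesis
    by (simp add: abs_minus_commute power2_eq_square mult.assoc)
qed

lemma integral_grid_cells:
  fixes f :: "real \<Rightarrow> real"
  assumes "0 \<le> d" and "\<And>b. f integrable_on {0..b}"
  shows "(\<Sum>n<N. integral {real n * d..real (Suc n) * d} f) = integral {0..real N * d} f"
proof (induction N)
  case (Suc N)
  have "integral {0..real N * d} f + integral {real N * d..real (Suc N) * d} f = integral {0..real (Suc N) * d} f"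
    using assms mult_right_mono[of "real N" "real (Suc N)" d]
    by (intro Henstock_Kurzweil_Integration.integral_combine) auto
  then show ?case
    using Suc by simp
qed simp

lemma integral_grid_limit_nonneg:
  fixes f :: "real \<Rightarrow> real"
  assumes nonneg: "\<And>x. 0 \<le> x \<Longrightarrow> 0 \<le> f x" and intv: "\<And>b. f integrable_on {0..b}"
    and "0 < d" and bounded: "\<And>N. integral {0..real N * d} f \<le> B"
  shows "f integrable_on {0..}" and "(\<lambda>N. integral {0..real N * d} f) \<longlonglongrightarrow> integral {0..} f"
proof -
  define g where "g N x = (if x \<in> {..real N * d} then f x else 0)" for N x
  have integral_g: "integral {0..} (g N) = integral {0..real N * d} f" for N
    unfolding g_def integral_restrict_Int by (simp add: Int_commute atLeastAtMost_def)
  have "f integrable_on {0..} \<and> (\<lambda>N. integral {0..} (g N)) \<longlonglongrightarrow> integral {0..} f"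
  proof (rule monotone_convergence_increasing)
    show "g N integrable_on {0..}" for N
      unfolding g_def integrable_restrict_Int
      using intv[of "real N * d"] by (simp add: Int_commute atLeastAtMost_def)
    show "g N x \<le> g (Suc N) x" if "x \<in> {0..}" for N x
    proof -
      have "real N * d \<le> real (Suc N) * d"
        using \<open>0 < d\<close> by simp
      then show ?thesis
        using that nonneg[of x] by (auto simp: g_def)
    qed
    show "(\<lambda>N. g N x) \<longlonglongrightarrow> f x" if "x \<in> {0..}" for x
    proof (rule tendsto_eventually)
      obtain M where "x / d \<le> real M"
        using real_arch_simple by blast
      then have "x \<le> real N * d" if "M \<le> N" for N
      proof -
        have "x / d \<le> real N"
          using \<open>x / d \<le> real M\<close> that by linarith
        then show ?thesis
          using \<open>0 < d\<close> by (simp add: divide_le_eq)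
      qed
      then show "\<forall>\<^sub>F N in sequentially. g N x = f x"
        unfolding eventually_sequentially g_def by auto
    qed
    have "\<bar>integral {0..} (g N)\<bar> \<le> B" for N
      using bounded[of N] integral_nonneg[OF intv, of "real N * d"] nonneg
      unfolding integral_g by auto
    then show "bounded (range (\<lambda>N. integral {0..} (g N)))"
      unfolding bounded_iff by (auto intro!: exI[of _ B])
  qed
  then show "f integrable_on {0..}" and "(\<lambda>N. integral {0..real N * d} f) \<longlonglongrightarrow> integral {0..} f"
    unfolding integral_g by auto
qed

lemma sums_integral_grid_cells:
  fixes f :: "real \<Rightarrow> real"
  assumes nonneg: "\<And>x. 0 \<le> x \<Longrightarrow> 0 \<le> f x" and intv: "\<And>b. f integrable_on {0..b}" and "0 < d"
    and majorant: "\<And>n. integral {real n * d..real (Suc n) * d} f \<le> B n" "summable B"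
  shows "f integrable_on {0..}"
    and "(\<lambda>n. integral {real n * d..real (Suc n) * d} f) sums integral {0..} f"
proof -
  have partial: "(\<Sum>n<N. integral {real n * d..real (Suc n) * d} f) = integral {0..real N * d} f" for N
    by (rule integral_grid_cells) (use \<open>0 < d\<close> intv in auto)
  have "integral {0..real N * d} f \<le> suminf B" for N
  proof -
    have "integral {0..real N * d} f = (\<Sum>n<N. integral {real n * d..real (Suc n) * d} f)"
      by (rule partial[symmetric])
    also have "\<dots> \<le> (\<Sum>n<N. B n)"
      by (intro sum_mono majorant(1))
    also have "\<dots> \<le> suminf B"
    proof (rule sum_le_suminf[OF majorant(2)])
      show "0 \<le> B n" for n
      proof -
        have "f integrable_on {real n * d..real (Suc n) * d}"
          by (rule integrable_on_subinterval[OF intv[of "real (Suc n) * d"]]) (use \<open>0 < d\<close> in auto)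
        moreover have "0 \<le> f x" if "x \<in> {real n * d..real (Suc n) * d}" for x
        proof -
          have "0 \<le> real n * d"
            using \<open>0 < d\<close> by simp
          then show ?thesis
            using that by (intro nonneg) simp
        qed
        ultimately have "0 \<le> integral {real n * d..real (Suc n) * d} f"
          by (rule Henstock_Kurzweil_Integration.integral_nonneg)
        then show ?thesis
          using majorant(1)[of n] by linarith
      qed
    qed simp
    finally show ?thesis .
  qed
  from integral_grid_limit_nonneg[OF nonneg intv \<open>0 < d\<close> this]
  show "f integrable_on {0..}" and "(\<lambda>n. integral {real n * d..real (Suc n) * d} f) sums integral {0..} f"
    unfolding sums_def partial by simp_all
qed

lemma riemann_sum_tendsto_integral:
  fixes f :: "real \<Rightarrow> real"
  assumes nonneg: "\<And>x. 0 \<le> x \<Longrightarrow> 0 \<le> f x" and cont: "continuous_on {0..} f"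
    and decay: "\<And>x. 0 \<le> x \<Longrightarrow> f x \<le> K / (1 + x)\<^sup>2"
    and lipschitz: "\<And>x y. 0 \<le> x \<Longrightarrow> x \<le> y \<Longrightarrow> \<bar>f y - f x\<bar> \<le> K * (y - x) / (1 + x)\<^sup>2"
  shows "f integrable_on {0..}"
    and "\<And>d. 0 < d \<Longrightarrow> summable (\<lambda>n. f (real n * d))"
    and "((\<lambda>d. d * (\<Sum>n. f (real n * d))) \<longlongrightarrow> integral {0..} f) (at_right 0)"
proof -
  have "0 \<le> K"
    using nonneg[of 0] decay[of 0] by simp
  have intv: "f integrable_on {a..b}" if "0 \<le> a" for a b
    using that by (intro integrable_continuous_interval continuous_on_subset[OF cont]) auto
  show summable: "summable (\<lambda>n. f (real n * d))" if "0 < d" for d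
    using that nonneg decay
    by (intro summable_comparison_test[OF _ summable_mult[OF inverse_square_grid_summable(1)[OF that], of K]])
      auto
  define cell where "cell d n = integral {real n * d..real (Suc n) * d} f" for d n
  have cell_close: "\<bar>d * f (real n * d) - cell d n\<bar> \<le> K * d\<^sup>2 / (1 + real n * d)\<^sup>2"
    if "0 < d" for d n
  proof -
    have "\<bar>d * f (real n * d) - integral {real n * d..real n * d + d} f\<bar> \<le> K / (1 + real n * d)\<^sup>2 * d\<^sup>2"
      using that \<open>0 \<le> K\<close> lipschitz[of "real n * d"]
      by (intro integral_cell_approx intv) (auto simp: mult.commute)
    then show ?thesis
      by (simp add: cell_def algebra_simps)
  qed
  have cells: "f integrable_on {0..}" "cell d sums integral {0..} f" if "0 < d" for d
  proof -
    have "cell d n \<le> d * f (real n * d) + K * d\<^sup>2 * (1 / (1 + real n * d)\<^sup>2)" for n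
      using cell_close[OF that, of n] by simp
    moreover have "summable (\<lambda>n. d * f (real n * d) + K * d\<^sup>2 * (1 / (1 + real n * d)\<^sup>2))"
      using that by (intro summable_add summable_mult summable inverse_square_grid_summable(1))
    ultimately show "f integrable_on {0..}" "cell d sums integral {0..} f"
      using sums_integral_grid_cells[OF nonneg intv[OF order_refl] that, where B =
          "\<lambda>n. d * f (real n * d) + K * d\<^sup>2 * (1 / (1 + real n * d)\<^sup>2)"]
      unfolding cell_def by auto
  qed
  then show "f integrable_on {0..}"
    using zero_less_one by blast
  have "\<bar>d * (\<Sum>n. f (real n * d)) - integral {0..} f\<bar> \<le> 2 * K * d" if "0 < d" "d \<le> 1" for d
  proof -
    have "\<bar>(\<Sum>n. d * f (real n * d)) - suminf (cell d)\<bar> \<le> K * d\<^sup>2 * (1 + d) / d"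
      using cell_close \<open>0 < d\<close> cells(2)[OF \<open>0 < d\<close>]
      by (intro suminf_close_inverse_square(2)) (auto simp: sums_iff)
    also have "\<dots> \<le> 2 * K * d"
      using that \<open>0 \<le> K\<close> by (simp add: power2_eq_square field_simps mult_left_mono)
    finally show ?thesis
      using cells(2)[OF \<open>0 < d\<close>] suminf_mult[OF summable[OF \<open>0 < d\<close>]] by (simp add: sums_iff)
  qed
  then show "((\<lambda>d. d * (\<Sum>n. f (real n * d))) \<longlongrightarrow> integral {0..} f) (at_right 0)"
    by (rule tendsto_at_right_0_linear_bound)
qed

lemma riemann_sum_norm_sq:
  fixes g :: "real \<Rightarrow> 'a::real_normed_vector"
  assumes cont: "continuous_on {0..} g"
    and decay: "\<And>x. 0 \<le> x \<Longrightarrow> norm (g x) \<le> C / (1 + x)\<^sup>2"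
    and lipschitz: "\<And>x y. 0 \<le> x \<Longrightarrow> x \<le> y \<Longrightarrow> norm (g y - g x) \<le> C * (y - x) / (1 + x)\<^sup>2"
  shows "\<And>d. 0 < d \<Longrightarrow> summable (\<lambda>n. (norm (g (real n * d)))\<^sup>2)"
    and "((\<lambda>d. d * (\<Sum>n. (norm (g (real n * d)))\<^sup>2)) \<longlongrightarrow> integral {0..} (\<lambda>x. (norm (g x))\<^sup>2)) (at_right 0)"
proof -
  have "0 \<le> C"
    using order_trans[OF norm_ge_zero decay[of 0]] by simp
  have sq_decay: "(norm (g x))\<^sup>2 \<le> 2 * C\<^sup>2 / (1 + x)\<^sup>2" if "0 \<le> x" for x
  proof -
    have "(norm (g x))\<^sup>2 \<le> (C / (1 + x)\<^sup>2) * (C / (1 + x)\<^sup>2)"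
      unfolding power2_eq_square[of "norm (g x)"] using decay[OF that] \<open>0 \<le> C\<close>
      by (intro mult_mono) auto
    also have "\<dots> \<le> C * C / (1 + x)\<^sup>2"
      by (rule mult_inverse_square_le[OF that \<open>0 \<le> C\<close> \<open>0 \<le> C\<close>])
    also have "\<dots> \<le> 2 * C\<^sup>2 / (1 + x)\<^sup>2"
      by (intro divide_right_mono) (auto simp: power2_eq_square)
    finally show ?thesis .
  qed
  have sq_lipschitz: "\<bar>(norm (g y))\<^sup>2 - (norm (g x))\<^sup>2\<bar> \<le> 2 * C\<^sup>2 * (y - x) / (1 + x)\<^sup>2"
    if "0 \<le> x" "x \<le> y" for x y
  proof -
    have "norm (g y) \<le> C / (1 + x)\<^sup>2"
      using decay[of y] inverse_square_antimono[of x y C] that \<open>0 \<le> C\<close> by simp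
    from norm_sq_diff_le[OF this decay[OF that(1)] lipschitz[OF that]]
    have "\<bar>(norm (g y))\<^sup>2 - (norm (g x))\<^sup>2\<bar> \<le> 2 * (C / (1 + x)\<^sup>2 * (C * (y - x) / (1 + x)\<^sup>2))"
      by (simp add: mult.assoc)
    also have "\<dots> \<le> 2 * (C * (C * (y - x)) / (1 + x)\<^sup>2)"
      using that \<open>0 \<le> C\<close> by (intro mult_left_mono mult_inverse_square_le) auto
    finally show ?thesis
      by (simp add: power2_eq_square mult_ac)
  qed
  have "continuous_on {0..} (\<lambda>x. (norm (g x))\<^sup>2)"
    by (intro continuous_intros cont)
  note riemann = riemann_sum_tendsto_integral[of "\<lambda>x. (norm (g x))\<^sup>2", OF _ this sq_decay sq_lipschitz]
  show "\<And>d. 0 < d \<Longrightarrow> summable (\<lambda>n. (norm (g (real n * d)))\<^sup>2)"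
    and "((\<lambda>d. d * (\<Sum>n. (norm (g (real n * d)))\<^sup>2)) \<longlongrightarrow> integral {0..} (\<lambda>x. (norm (g x))\<^sup>2)) (at_right 0)"
    using riemann(2,3) by simp_all
qed

lemma riemann_sum_norm_sq_perturbed:
  fixes g :: "real \<Rightarrow> 'a::real_normed_vector" and u :: "real \<Rightarrow> nat \<Rightarrow> 'a"
  assumes summable: "\<And>d. 0 < d \<Longrightarrow> summable (\<lambda>n. (norm (g (real n * d)))\<^sup>2)"
    and riemann: "((\<lambda>d. d * (\<Sum>n. (norm (g (real n * d)))\<^sup>2)) \<longlongrightarrow> I) (at_right 0)"
    and decay_g: "\<And>x. 0 \<le> x \<Longrightarrow> norm (g x) \<le> C / (1 + x)\<^sup>2"
    and decay_u: "\<And>d n. 0 < d \<Longrightarrow> norm (u d n) \<le> C / (1 + real n * d)\<^sup>2"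
    and close: "\<And>d n. 0 < d \<Longrightarrow> norm (u d n - g (real n * d)) \<le> C * d / (1 + real n * d)\<^sup>2"
  shows "\<And>d. 0 < d \<Longrightarrow> summable (\<lambda>n. (norm (u d n))\<^sup>2)"
    and "((\<lambda>d. d * (\<Sum>n. (norm (u d n))\<^sup>2)) \<longlongrightarrow> I) (at_right 0)"
proof -
  have "0 \<le> C"
    using order_trans[OF norm_ge_zero decay_g[of 0]] by simp
  have pointwise: "\<bar>(norm (u d n))\<^sup>2 - (norm (g (real n * d)))\<^sup>2\<bar> \<le> 2 * C\<^sup>2 * d / (1 + real n * d)\<^sup>2"
    if "0 < d" for d n
  proof -
    have x: "0 \<le> real n * d"
      using that by simp
    from norm_sq_diff_le[OF decay_u[OF that] decay_g[OF x] close[OF that]]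
    have "\<bar>(norm (u d n))\<^sup>2 - (norm (g (real n * d)))\<^sup>2\<bar>
        \<le> 2 * (C / (1 + real n * d)\<^sup>2 * (C * d / (1 + real n * d)\<^sup>2))"
      by (simp add: mult.assoc)
    also have "\<dots> \<le> 2 * (C * (C * d) / (1 + real n * d)\<^sup>2)"
      using x that \<open>0 \<le> C\<close> by (intro mult_left_mono mult_inverse_square_le) auto
    finally show ?thesis
      by (simp add: power2_eq_square mult_ac)
  qed
  show "summable (\<lambda>n. (norm (u d n))\<^sup>2)" if "0 < d" for d
    using suminf_close_inverse_square(1)[OF that summable[OF that] pointwise[OF that]] .
  have "\<bar>d * (\<Sum>n. (norm (u d n))\<^sup>2) - d * (\<Sum>n. (norm (g (real n * d)))\<^sup>2) - 0\<bar> \<le> 4 * C\<^sup>2 * d"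
    if "0 < d" "d \<le> 1" for d
  proof -
    have "\<bar>d * (\<Sum>n. (norm (u d n))\<^sup>2) - d * (\<Sum>n. (norm (g (real n * d)))\<^sup>2)\<bar>
        \<le> d * (2 * C\<^sup>2 * d * (1 + d) / d)"
      using suminf_close_inverse_square(2)[OF that(1) summable[OF that(1)] pointwise[OF that(1)]] that(1)
      by (simp flip: right_diff_distrib add: abs_mult mult_left_mono)
    also have "\<dots> \<le> 4 * C\<^sup>2 * d"
      using that mult_right_mono[of "1 + d" 2 "C\<^sup>2"] by simp
    finally show ?thesis
      by simp
  qed
  then have "((\<lambda>d. d * (\<Sum>n. (norm (u d n))\<^sup>2) - d * (\<Sum>n. (norm (g (real n * d)))\<^sup>2)) \<longlongrightarrow> 0) (at_right 0)"
    by (rule tendsto_at_right_0_linear_bound)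
  from tendsto_add[OF this riemann]
  show "((\<lambda>d. d * (\<Sum>n. (norm (u d n))\<^sup>2)) \<longlongrightarrow> I) (at_right 0)"
    by simp
qed

locale decaying_wavefunction =
  fixes \<psi> \<psi>' \<psi>'' :: "real \<Rightarrow> complex" and C :: real
  assumes derivative_0: "\<And>x. x \<ge> 0 \<Longrightarrow> (\<psi> has_vector_derivative \<psi>' x) (at x within {0..})"
    and derivative_1: "\<And>x. x \<ge> 0 \<Longrightarrow> (\<psi>' has_vector_derivative \<psi>'' x) (at x within {0..})"
    and vanishes_at_0: "\<psi> 0 = 0"
    and decay: "\<And>x. x \<ge> 0 \<Longrightarrow> cmod (\<psi> x) + cmod (\<psi>' x) + cmod (\<psi>'' x) \<le> C / (1 + x)\<^sup>2"
begin

lemma decay_0: "x \<ge> 0 \<Longrightarrow> cmod (\<psi> x) \<le> C / (1 + x)\<^sup>2"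
  and decay_1: "x \<ge> 0 \<Longrightarrow> cmod (\<psi>' x) \<le> C / (1 + x)\<^sup>2"
  and decay_2: "x \<ge> 0 \<Longrightarrow> cmod (\<psi>'' x) \<le> C / (1 + x)\<^sup>2"
  using decay[of x] norm_ge_zero[of "\<psi> x"] norm_ge_zero[of "\<psi>' x"] norm_ge_zero[of "\<psi>'' x"]
  by linarith+

lemma C_nonneg: "0 \<le> C"
  using order_trans[OF norm_ge_zero decay_0[of 0]] by simp

lemma lipschitz_0: "0 \<le> x \<Longrightarrow> x \<le> y \<Longrightarrow> cmod (\<psi> y - \<psi> x) \<le> C * (y - x) / (1 + x)\<^sup>2"
  by (rule lipschitz_of_decaying_derivative[OF derivative_0 decay_1])

lemma lipschitz_1: "0 \<le> x \<Longrightarrow> x \<le> y \<Longrightarrow> cmod (\<psi>' y - \<psi>' x) \<le> C * (y - x) / (1 + x)\<^sup>2"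
  by (rule lipschitz_of_decaying_derivative[OF derivative_1 decay_2])

lemma taylor_bound:
  "0 \<le> x \<Longrightarrow> x \<le> z \<Longrightarrow> z \<le> y \<Longrightarrow>
    cmod (\<psi> y - \<psi> x - complex_of_real (y - x) * \<psi>' z) \<le> C * (y - x)\<^sup>2 / (1 + x)\<^sup>2"
  using taylor_of_decaying_second_derivative[OF derivative_0 derivative_1 decay_2]
  by (simp add: scaleR_conv_of_real)

lemma continuous_on_0: "continuous_on {0..} \<psi>"
  and continuous_on_1: "continuous_on {0..} \<psi>'"
  unfolding continuous_on_eq_continuous_within
  using derivative_0 derivative_1 has_vector_derivative_continuous by (metis atLeast_iff)+

lemma grid_norm_sq_sum:
  "0 < d \<Longrightarrow> summable (\<lambda>n. (cmod (\<psi> (real n * d)))\<^sup>2)"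
  "((\<lambda>d. d * (\<Sum>n. (cmod (\<psi> (real n * d)))\<^sup>2)) \<longlongrightarrow> integral {0..} (\<lambda>x. (cmod (\<psi> x))\<^sup>2)) (at_right 0)"
  using riemann_sum_norm_sq[OF continuous_on_0 decay_0 lipschitz_0] by auto

lemma grid_first_diff_sum:
  "((\<lambda>d. (\<Sum>n. (cmod (\<psi> (real (Suc n) * d) - \<psi> (real n * d)))\<^sup>2) / d) \<longlongrightarrow> UD \<psi>') (at_right 0)"
proof -
  define q where "q d n = (\<psi> (real (Suc n) * d) - \<psi> (real n * d)) / complex_of_real d" for d n
  have grid_step: "real (Suc n) * d = real n * d + d" for n d
    by (simp add: algebra_simps)
  have q_decay: "cmod (q d n) \<le> C / (1 + real n * d)\<^sup>2" if "0 < d" for d n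
    unfolding q_def grid_step using lipschitz_0[of "real n * d" "real n * d + d"] that
    by (simp add: norm_divide divide_le_eq mult.commute)
  have q_close: "cmod (q d n - \<psi>' (real n * d)) \<le> C * d / (1 + real n * d)\<^sup>2" if "0 < d" for d n
  proof -
    have "q d n - \<psi>' (real n * d)
        = (\<psi> (real n * d + d) - \<psi> (real n * d) - complex_of_real d * \<psi>' (real n * d)) / complex_of_real d"
      unfolding q_def grid_step using that by (simp add: field_simps)
    then show ?thesis
      using taylor_bound[of "real n * d" "real n * d" "real n * d + d"] that
      by (simp add: norm_divide divide_le_eq power2_eq_square mult_ac)
  qed
  have riemann_1: "\<And>d. 0 < d \<Longrightarrow> summable (\<lambda>n. (cmod (\<psi>' (real n * d)))\<^sup>2)"
    "((\<lambda>d. d * (\<Sum>n. (cmod (\<psi>' (real n * d)))\<^sup>2)) \<longlongrightarrow> integral {0..} (\<lambda>x. (cmod (\<psi>' x))\<^sup>2)) (at_right 0)"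
    using riemann_sum_norm_sq[OF continuous_on_1 decay_1 lipschitz_1] by auto
  have riemann_q: "\<And>d. 0 < d \<Longrightarrow> summable (\<lambda>n. (cmod (q d n))\<^sup>2)"
    "((\<lambda>d. d * (\<Sum>n. (cmod (q d n))\<^sup>2)) \<longlongrightarrow> integral {0..} (\<lambda>x. (cmod (\<psi>' x))\<^sup>2)) (at_right 0)"
    using riemann_sum_norm_sq_perturbed[OF riemann_1 decay_1 q_decay q_close] by auto
  have scaled: "(\<Sum>n. (cmod (\<psi> (real (Suc n) * d) - \<psi> (real n * d)))\<^sup>2) = d\<^sup>2 * (\<Sum>n. (cmod (q d n))\<^sup>2)"
    if "0 < d" for d
  proof -
    have "(cmod (\<psi> (real (Suc n) * d) - \<psi> (real n * d)))\<^sup>2 = d\<^sup>2 * (cmod (q d n))\<^sup>2" for n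
      using that by (simp add: q_def norm_divide power_divide)
    then show ?thesis
      using suminf_mult[OF riemann_q(1)[OF that]] by simp
  qed
  show "((\<lambda>d. (\<Sum>n. (cmod (\<psi> (real (Suc n) * d) - \<psi> (real n * d)))\<^sup>2) / d) \<longlongrightarrow> UD \<psi>') (at_right 0)"
    unfolding UD_def
  proof (rule Lim_transform_eventually[OF riemann_q(2)])
    show "\<forall>\<^sub>F d in at_right 0. d * (\<Sum>n. (cmod (q d n))\<^sup>2)
        = (\<Sum>n. (cmod (\<psi> (real (Suc n) * d) - \<psi> (real n * d)))\<^sup>2) / d"
      using scaled by (auto simp: eventually_at_right_field power2_eq_square intro!: exI[of _ 1])
  qed
qed

lemma grid_second_diff_bound:
  assumes "0 < d"
  shows "cmod (second_diff (\<lambda>n. \<psi> (real n * d)) (Suc m)) \<le> 2 * C * d\<^sup>2 / (1 + real m * d)\<^sup>2"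
proof -
  define x where "x = real m * d"
  have "0 \<le> x"
    using assms by (simp add: x_def)
  have grid: "real m * d = x" "real (Suc m) * d = x + d" "real (Suc (Suc m)) * d = x + d + d"
    by (simp_all add: x_def algebra_simps)
  have "second_diff (\<lambda>n. \<psi> (real n * d)) (Suc m)
      = (\<psi> (x + d + d) - \<psi> (x + d) - complex_of_real d * \<psi>' (x + d))
        - (\<psi> (x + d) - \<psi> x - complex_of_real d * \<psi>' (x + d))"
    unfolding second_diff_Suc grid by simp
  also have "cmod \<dots> \<le> C * d\<^sup>2 / (1 + (x + d))\<^sup>2 + C * d\<^sup>2 / (1 + x)\<^sup>2"
    using taylor_bound[of "x + d" "x + d" "x + d + d"] taylor_bound[of x "x + d" "x + d"] \<open>0 \<le> x\<close> assms
    by (intro order_trans[OF norm_triangle_ineq4 add_mono]) simp_all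
  also have "\<dots> \<le> 2 * C * d\<^sup>2 / (1 + x)\<^sup>2"
    using inverse_square_antimono[of x "x + d" "C * d\<^sup>2"] \<open>0 \<le> x\<close> assms C_nonneg by simp
  finally show ?thesis
    by (simp add: x_def)
qed

text \<open>At n = 0 the ladder has no level -1, so the second difference is psi(d) - 2 psi(0): it is
  O(d) instead of O(d^2), and small at all only because psi(0) = 0.\<close>
lemma grid_second_diff_sum:
  "((\<lambda>d. (\<Sum>n. (cmod (second_diff (\<lambda>n. \<psi> (real n * d)) n))\<^sup>2) / d) \<longlongrightarrow> 0) (at_right 0)"
proof (rule tendsto_at_right_0_linear_bound)
  fix d :: real
  assume d: "0 < d" "d \<le> 1"
  define D where "D = (\<lambda>n. (cmod (second_diff (\<lambda>n. \<psi> (real n * d)) n))\<^sup>2)"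
  have interior: "\<bar>D (Suc m) - 0\<bar> \<le> 4 * C\<^sup>2 * d ^ 4 / (1 + real m * d)\<^sup>2" for m
  proof -
    have "D (Suc m) \<le> (2 * C * d\<^sup>2 / (1 + real m * d)\<^sup>2) * (2 * C * d\<^sup>2 / (1 + real m * d)\<^sup>2)"
      unfolding D_def power2_eq_square[of "cmod _"]
      using grid_second_diff_bound[OF d(1), of m] C_nonneg by (intro mult_mono) auto
    also have "\<dots> \<le> 4 * C\<^sup>2 * d ^ 4 / (1 + real m * d)\<^sup>2"
      using mult_inverse_square_le[of "real m * d" "2 * C * d\<^sup>2" "2 * C * d\<^sup>2"] d C_nonneg
      by (simp add: power2_eq_square power4_eq_xxxx mult_ac)
    finally show ?thesis
      by (simp add: D_def)
  qed
  note close = suminf_close_inverse_square[OF d(1) summable_zero interior]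
  have "D 0 = (cmod (\<psi> d - \<psi> 0))\<^sup>2"
    using vanishes_at_0 by (simp add: D_def second_diff_def)
  also have "\<dots> \<le> (C * d)\<^sup>2"
    using lipschitz_0[of 0 d] d by (intro power_mono) auto
  finally have boundary: "D 0 \<le> C\<^sup>2 * d\<^sup>2"
    by (simp add: power_mult_distrib)
  have "summable D"
    using close(1) summable_Suc_iff[of D] unfolding D_def by simp
  have "suminf D = D 0 + (\<Sum>m. D (Suc m))"
    using suminf_split_head[OF \<open>summable D\<close>] by simp
  also have "\<dots> \<le> C\<^sup>2 * d\<^sup>2 + 4 * C\<^sup>2 * d ^ 4 * (1 + d) / d"
    using boundary close(2) by simp
  also have "\<dots> = C\<^sup>2 * d\<^sup>2 + 4 * C\<^sup>2 * d\<^sup>2 * (d * (1 + d))"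
    using d by (simp add: power2_eq_square power4_eq_xxxx)
  also have "\<dots> \<le> C\<^sup>2 * d\<^sup>2 + 4 * C\<^sup>2 * d\<^sup>2 * 2"
    using mult_mono[of d 1 "1 + d" 2] d by (intro add_left_mono mult_left_mono) auto
  also have "\<dots> = 9 * C\<^sup>2 * d\<^sup>2"
    by simp
  finally have "suminf D / d \<le> 9 * C\<^sup>2 * d"
    using d by (simp add: divide_le_eq power2_eq_square mult_ac)
  moreover have "0 \<le> suminf D"
    using \<open>summable D\<close> by (rule suminf_nonneg) (simp add: D_def)
  ultimately have "\<bar>suminf D / d - 0\<bar> \<le> 9 * C\<^sup>2 * d"
    using d by simp
  then show "\<bar>(\<Sum>n. (cmod (second_diff (\<lambda>n. \<psi> (real n * d)) n))\<^sup>2) / d - 0\<bar> \<le> 9 * C\<^sup>2 * d"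
    by (simp add: D_def)
qed

end

lemma choi_infidelity_beta_state:
  assumes "qubit_unitary V" and "\<psi> 0 = 0" and "0 < d"
    and summable: "summable (\<lambda>n. (cmod (\<psi> (real n * d)))\<^sup>2)"
    and S: "0 < d * (\<Sum>n. (cmod (\<psi> (real n * d)))\<^sup>2)"
  shows "choi_infidelity V (beta_state \<psi> d) / d\<^sup>2
    = ((cmod (V 0 1))\<^sup>2 * ((\<Sum>n. (cmod (\<psi> (real (Suc n) * d) - \<psi> (real n * d)))\<^sup>2) / d)
       - ((cmod (V 0 1))\<^sup>2)\<^sup>2 / 4 * ((\<Sum>n. (cmod (second_diff (\<lambda>n. \<psi> (real n * d)) n))\<^sup>2) / d))
      / (d * (\<Sum>n. (cmod (\<psi> (real n * d)))\<^sup>2))"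
proof -
  have "0 < (\<Sum>n. (cmod (\<psi> (real n * d)))\<^sup>2)"
    using S \<open>0 < d\<close> by (simp add: zero_less_mult_iff)
  from choi_infidelity_normalized[OF assms(1) _ summable this] assms(2)
  show ?thesis
    unfolding beta_state_def using \<open>0 < d\<close> by (simp add: field_simps power2_eq_square)
qed

theorem mainTheorem6:
  fixes V :: "nat \<Rightarrow> nat \<Rightarrow> complex"
    and \<psi> \<psi>' \<psi>'' :: "real \<Rightarrow> complex"
    and C :: real
  assumes unitary: "qubit_unitary V"
    and d1: "\<And>x. x \<ge> 0 \<Longrightarrow> (\<psi> has_vector_derivative \<psi>' x) (at x within {0..})"
    and d2: "\<And>x. x \<ge> 0 \<Longrightarrow> (\<psi>' has_vector_derivative \<psi>'' x) (at x within {0..})"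
    and cont2: "continuous_on {0..} \<psi>''"
    and zero: "\<psi> 0 = 0"
    and norm: "((\<lambda>x. (cmod (\<psi> x))^2) has_integral 1) {0..}"
    and decay: "\<And>x. x \<ge> 0 \<Longrightarrow> cmod (\<psi> x) + cmod (\<psi>' x) + cmod (\<psi>'' x) \<le> C / (1 + x)^2"
  shows "((\<lambda>\<delta>. choi_infidelity V (beta_state \<psi> \<delta>) / \<delta>^2)
            \<longlongrightarrow> (cmod (V 0 1))^2 * UD \<psi>') (at_right 0)"
proof -
  interpret decaying_wavefunction \<psi> \<psi>' \<psi>'' C
    using d1 d2 zero decay by unfold_locales auto
  define p where "p = (cmod (V 0 1))\<^sup>2"
  define S where "S d = (\<Sum>n. (cmod (\<psi> (real n * d)))\<^sup>2)" for d
  define E where "E d = (\<Sum>n. (cmod (\<psi> (real (Suc n) * d) - \<psi> (real n * d)))\<^sup>2) / d" for d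
  define Q where "Q d = (\<Sum>n. (cmod (second_diff (\<lambda>n. \<psi> (real n * d)) n))\<^sup>2) / d" for d
  have dS: "((\<lambda>d. d * S d) \<longlongrightarrow> 1) (at_right 0)"
    using grid_norm_sq_sum(2) unfolding integral_unique[OF norm] S_def .
  have "((\<lambda>d. (p * E d - p\<^sup>2 / 4 * Q d) / (d * S d)) \<longlongrightarrow> (p * UD \<psi>' - p\<^sup>2 / 4 * 0) / 1) (at_right 0)"
    using grid_first_diff_sum grid_second_diff_sum unfolding E_def[abs_def] Q_def[abs_def]
    by (intro tendsto_intros dS) auto
  moreover have "\<forall>\<^sub>F d in at_right 0. (p * E d - p\<^sup>2 / 4 * Q d) / (d * S d)
      = choi_infidelity V (beta_state \<psi> d) / d\<^sup>2"
    using order_tendstoD(1)[OF dS zero_less_one] eventually_at_right_less[of 0]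
    by eventually_elim
      (simp add: choi_infidelity_beta_state[of V \<psi>, OF unitary zero] grid_norm_sq_sum(1) S_def E_def Q_def p_def)
  ultimately show ?thesis
    by (simp add: Lim_transform_eventually p_def)
qed

end
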